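(* Let $\{P_n\}_{n\ge0}$ be polynomials with $P_n$ monic of degree $n$ and $P_n(0)=0$ for $n\ge1$ (so $P_0=1$). Let $H(x,z)=\sum_{n\ge0}P_n(x)z^n$, let $A$ be the linear operator on $\mathbb C[x]$ with $AP_n=P_{n-1}$ ($P_{-1}=0$), and $W$ the linear operator with $Wx^n=P_n$. Define on $\mathbb C[x]$ the linear operators $D f(x)=\frac{f(x)-f(0)}{x}$, $E^af(x)=\frac{xf(x)-af(a)}{x-a}$ ($a\in\mathbb R$), and $\Delta:\mathbb C[x]\to\mathbb C[x]\otimes\mathbb C[x]\cong\mathbb C[x,y]$, $\Delta(f)(x,y)=\frac{xf(x)-yf(y)}{x-y}$. Let $\Delta_\ast:\mathbb C[x]\to\mathbb C[x]\ast\mathbb C[x]\cong\mathbb C\langle x,y\rangle$ be the algebra homomorphism $\Delta_\ast(f)(x,y)=f(x+y)$. Then the following conditions are all equivalent: (a) $\Delta W=(W\otimes W)\Delta$; (b) $\Delta(P_n)(x,y)=\sum_{k=0}^nP_k(x)P_{n-k}(y)$ for all $n\ge0$; (c) $\Delta(H)=H\otimes H$, i.e. $\Delta(H)(x,y,z)=H(x,z)H(y,z)$; (d) $H(x,z)=\frac{1}{1-u(z)x}$ for some formal power series $u$ with $u(0)=0$, $u'(0)=1$; (e) $DH(x,z)=u(z)H(x,z)$ for some such $u$; (f) $A=u^{-1}(D)$ for some such $u$ ($u^{-1}$ the compositional inverse); (g) $A$ commutes with $D$; (h) $A$ commutes with $E^a$ for all $a$; (i) $(A\otimes I)\Delta=\Delta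 A$; (j) $\Delta_\ast W=(W\ast W)\Delta_\ast$; (k) for all $n\ge1$, in $\mathbb C\langle x,y\rangle$, \[P_n(x+y)=\sum_{k=1}^n\sum_{\substack{i(1),\dots,i(k)\ge1\\ i(1)+\dots+i(k)=n}}\bigl(P_{i(1)}(x)P_{i(2)}(y)P_{i(3)}(x)P_{i(4)}(y)\cdots+P_{i(1)}(y)P_{i(2)}(x)P_{i(3)}(y)P_{i(4)}(x)\cdots\bigr)\] (each product having $k$ alternating factors); (l) $H(x+y,z)=\frac{H(x,z)H(y,z)}{H(x,z)+H(y,z)-H(x,z)H(y,z)}$.
   Context: $\mathbb C[x]\ast\mathbb C[x]$ is the algebraic free product of unital algebras (amalgamated over the unit), identified with the noncommutative polynomial algebra $\mathbb C\langle x,y\rangle$ in $x$ and $y$. For unital linear operators $W_1,W_2$ on algebras $\mathcal A_1,\mathcal A_2$, $W_1\ast W_2$ is the unital operator on $\mathcal A_1\ast\mathcal A_2$ with $(W_1\ast W_2)(a_1a_2\cdots a_n)=(W_{i(1)}a_1)\cdots(W_{i(n)}a_n)$ whenever $a_j\in\mathcal A_{i(j)}\setminus\mathbb C$ and $i(j)\ne i(j+1)$. Operators act on generating functions coefficientwise in $z$. This is the case $[n]_\beta=1$ ($n\ge1$) of a general $\beta$-framework, in which $D$, $E^a$, $\Delta$, $\exp_\beta(z)=\frac1{1-z}$ are the corresponding $\beta$-derivative, $\beta$-translation, $\beta$-coproduct and $\beta$-exponential. *)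

theory Defs
  imports "HOL-Computational_Algebra.Computational_Algebra"
begin

definition lin_op :: "(complex poly \<Rightarrow> complex poly) \<Rightarrow> bool" where
  "lin_op T \<longleftrightarrow> (\<forall>f g. T (f + g) = T f + T g) \<and> (\<forall>c f. T (smult c f) = smult c (T f))"

definition Dop :: "complex poly \<Rightarrow> complex poly" where
  "Dop f = (f - [:poly f 0:]) div [:0, 1:]"

definition Eop :: "real \<Rightarrow> complex poly \<Rightarrow> complex poly" where
  "Eop a f = ([:0, 1:] * f - [:of_real a * poly f (of_real a):]) div [:- of_real a, 1:]"

text \<open>Operator g(T) for a formal power series g and a locally nilpotent operator T
  (used with T = D, for which D^n f = 0 when n > degree f).\<close>
definition fps_op :: "complex fps \<Rightarrow> (complex poly \<Rightarrow> complex poly) \<Rightarrow> complex poly \<Rightarrow> complex poly" where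
  "fps_op g T f = (\<Sum>n\<le>degree f. smult (g $ n) ((T ^^ n) f))"

section \<open>C[x,y] = C[x] (x) C[x], represented as complex poly poly
  (outer variable y, inner variable x)\<close>

definition embX :: "complex poly \<Rightarrow> complex poly poly" where
  "embX f = [:f:]"

definition embY :: "complex poly \<Rightarrow> complex poly poly" where
  "embY f = map_poly (\<lambda>c. [:c:]) f"

definition varX :: "complex poly poly" where "varX = embX [:0, 1:]"
definition varY :: "complex poly poly" where "varY = embY [:0, 1:]"

definition Delta :: "complex poly \<Rightarrow> complex poly poly" where
  "Delta f = (varX * embX f - varY * embY f) div (varX - varY)"

definition tens :: "(complex poly \<Rightarrow> complex poly) \<Rightarrow> (complex poly \<Rightarrow> complex poly)
    \<Rightarrow> complex poly poly \<Rightarrow> complex poly poly" where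
  "tens S T q = (\<Sum>j\<le>degree q. \<Sum>i\<le>degree (coeff q j).
      smult [:coeff (coeff q j) i:] (embX (S (monom 1 i)) * embY (T (monom 1 j))))"

definition eval_sum2 :: "complex poly \<Rightarrow> complex poly poly" where
  "eval_sum2 f = poly (map_poly (\<lambda>c. [:[:c:]:]) f) (varX + varY)"

section \<open>C<x,y> (noncommutative polynomials), elements as coefficient functions on words;
  letter False = x, letter True = y\<close>

type_synonym ncpoly = "bool list \<Rightarrow> complex"

definition nc_one :: ncpoly where "nc_one = (\<lambda>w. if w = [] then 1 else 0)"
definition nc_var :: "bool \<Rightarrow> ncpoly" where "nc_var b = (\<lambda>w. if w = [b] then 1 else 0)"
definition nc_add :: "ncpoly \<Rightarrow> ncpoly \<Rightarrow> ncpoly" where "nc_add p q = (\<lambda>w. p w + q w)"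
definition nc_smult :: "complex \<Rightarrow> ncpoly \<Rightarrow> ncpoly" where "nc_smult c p = (\<lambda>w. c * p w)"
definition nc_mult :: "ncpoly \<Rightarrow> ncpoly \<Rightarrow> ncpoly" where
  "nc_mult p q = (\<lambda>w. \<Sum>i\<le>length w. p (take i w) * q (drop i w))"
definition nc_sum :: "'a set \<Rightarrow> ('a \<Rightarrow> ncpoly) \<Rightarrow> ncpoly" where
  "nc_sum S g = (\<lambda>w. \<Sum>s\<in>S. g s w)"

fun nc_pow :: "ncpoly \<Rightarrow> nat \<Rightarrow> ncpoly" where
  "nc_pow p 0 = nc_one"
| "nc_pow p (Suc n) = nc_mult p (nc_pow p n)"

definition nc_eval :: "complex poly \<Rightarrow> ncpoly \<Rightarrow> ncpoly" where
  "nc_eval f t = nc_sum {..degree f} (\<lambda>n. nc_smult (coeff f n) (nc_pow t n))"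

definition nc_emb :: "bool \<Rightarrow> complex poly \<Rightarrow> ncpoly" where
  "nc_emb b f = nc_eval f (nc_var b)"

definition Delta_ast :: "complex poly \<Rightarrow> ncpoly" where
  "Delta_ast f = nc_eval f (nc_add (nc_var False) (nc_var True))"

text \<open>Image under W1 * W2 of a basis word x^{k1} y^{k2} x^{k3} ... (maximal runs, k_j \<ge> 1):
  W_{i(1)}(x^{k1}) W_{i(2)}(x^{k2}) ... (placed in the respective copies).\<close>
function word_img :: "(complex poly \<Rightarrow> complex poly) \<Rightarrow> (complex poly \<Rightarrow> complex poly)
    \<Rightarrow> bool list \<Rightarrow> ncpoly" where
  "word_img W1 W2 [] = nc_one"
| "word_img W1 W2 (b # w) =
     nc_mult (nc_emb b ((if b then W2 else W1) (monom 1 (Suc (length (takeWhile (\<lambda>c. c = b) w))))))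
             (word_img W1 W2 (dropWhile (\<lambda>c. c = b) w))"
  by pat_completeness auto
termination
  by (relation "measure (\<lambda>(_, _, w). length w)") (auto simp: le_imp_less_Suc length_dropWhile_le)

text \<open>The free product operator W1 * W2 on C<x,y>, extended linearly from the basis words
  (applied to finitely supported elements).\<close>
definition free_op :: "(complex poly \<Rightarrow> complex poly) \<Rightarrow> (complex poly \<Rightarrow> complex poly)
    \<Rightarrow> ncpoly \<Rightarrow> ncpoly" where
  "free_op W1 W2 p = nc_sum {w. p w \<noteq> 0} (\<lambda>w. nc_smult (p w) (word_img W1 W2 w))"

fun alt_prod :: "(nat \<Rightarrow> complex poly) \<Rightarrow> bool \<Rightarrow> nat list \<Rightarrow> ncpoly" where
  "alt_prod P b [] = nc_one"
| "alt_prod P b (i # is) = nc_mult (nc_emb b (P i)) (alt_prod P (\<not> b) is)"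

end

theory Submission
  imports Defs
begin

(* Write H(x,z) = sum_l c_l(z) x^l. Every condition is equivalent to c_l = u^l for all l, where
   u = c_1, i.e. to H = 1/(1 - u x). The x^i y^j-coefficient of Delta H is c_(i+j), which gives
   (a)-(c), and (d), (e) are this identity solved for H and for D H = u H. The coordinates of a
   polynomial in the basis P_k are read off by A^k, so if A commutes with D, the P_k-coordinate
   of D^j P_n is [x^j] P_(n-k), which says c_(i+j) = c_i c_j; conversely D acts on H as
   multiplication by u while A lowers the index, whence A = u^(-1)(D). (h) and (i) follow because
   E^a = (I - aD)^(-1) and the y^j-coefficient of Delta f is D^j f. In C<x,y>, the word with run
   lengths l_1, ..., l_k has coefficient c_(l_1 + ... + l_k) in P_n(x+y) and [z^n] c_(l_1) ... c_(l_k)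
   in the alternating sum (k); (j) is (k) on the monomial basis. Finally, with L = 1/H, (l) says
   L(x+y) = L(x) + L(y) - 1, i.e. that every z-coefficient of L is affine linear in x. *)

section \<open>The operators D, E^a and g(D)\<close>

lemma lin_op_0: "lin_op T \<Longrightarrow> T 0 = 0"
  unfolding lin_op_def by (metis smult_0_left)

lemma lin_op_add: "lin_op T \<Longrightarrow> T (f + g) = T f + T g"
  unfolding lin_op_def by blast

lemma lin_op_smult: "lin_op T \<Longrightarrow> T (smult c f) = smult c (T f)"
  unfolding lin_op_def by blast

lemma lin_op_diff: "lin_op T \<Longrightarrow> T (f - g) = T f - T g"
  using lin_op_add[of T g "f - g"] by simp

lemma lin_op_sum: "lin_op T \<Longrightarrow> T (\<Sum>i\<in>S. g i) = (\<Sum>i\<in>S. T (g i))"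
  by (induction S rule: infinite_finite_induct) (auto simp: lin_op_0 lin_op_add)

lemma lin_op_sum_smult:
  "lin_op T \<Longrightarrow> T (\<Sum>i\<in>S. smult (c i) (g i)) = (\<Sum>i\<in>S. smult (c i) (T (g i)))"
  by (simp add: lin_op_sum lin_op_smult)

lemma lin_op_comp: "lin_op S \<Longrightarrow> lin_op T \<Longrightarrow> lin_op (S \<circ> T)"
  unfolding lin_op_def by simp

lemma lin_op_funpow: "lin_op T \<Longrightarrow> lin_op (T ^^ k)"
  by (induction k) (simp_all add: lin_op_comp lin_op_def)

lemma smult_sum_right: "smult a (\<Sum>i\<in>S. f i) = (\<Sum>i\<in>S. smult a (f i))"
  by (induction S rule: infinite_finite_induct) (auto simp: smult_add_right)

lemma funpow_commute:
  assumes "\<And>g. S (T g) = T (S g)"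
  shows "(S ^^ k) ((T ^^ j) f) = (T ^^ j) ((S ^^ k) f)"
proof -
  have "S ((T ^^ j) g) = (T ^^ j) (S g)" for j g
    by (induction j) (auto simp: assms)
  then show ?thesis by (induction k) auto
qed

lemma Dop_pCons [simp]: "Dop (pCons a q) = q"
proof -
  have "pCons a q - [:poly (pCons a q) 0:] = [:0, 1:] * q"
    by (simp add: poly_eq_iff coeff_pCons split: nat.splits)
  then show ?thesis
    unfolding Dop_def by (metis nonzero_mult_div_cancel_left pCons_eq_0_iff zero_neq_one)
qed

lemma coeff_Dop [simp]: "coeff (Dop f) i = coeff f (Suc i)"
  by (cases f) simp

lemma x_mult_Dop: "[:0, 1:] * Dop f = f - [:poly f 0:]"
proof -
  obtain a q where f: "f = pCons a q"
    by (cases f) auto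
  show ?thesis
    unfolding f by (simp add: poly_eq_iff coeff_pCons split: nat.splits)
qed

lemma lin_op_Dop: "lin_op Dop"
  by (simp add: lin_op_def poly_eq_iff)

lemma coeff_Dop_funpow: "coeff ((Dop ^^ j) f) i = coeff f (i + j)"
  by (induction j arbitrary: i) auto

lemma Dop_funpow_eq_0: "degree f < j \<Longrightarrow> (Dop ^^ j) f = 0"
  by (simp add: poly_eq_iff coeff_Dop_funpow coeff_eq_0)

lemma degree_Dop_funpow_le: "degree ((Dop ^^ j) f) \<le> degree f"
  by (rule degree_le) (simp add: coeff_Dop_funpow coeff_eq_0)

lemma Dop_funpow_monom: "j \<le> n \<Longrightarrow> (Dop ^^ j) (monom 1 n) = monom 1 (n - j)"
  by (rule poly_eqI) (auto simp: coeff_Dop_funpow coeff_monom)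

lemma fps_op_eq_sum:
  assumes "degree f \<le> N"
  shows "fps_op g Dop f = (\<Sum>m\<le>N. smult (g $ m) ((Dop ^^ m) f))"
  unfolding fps_op_def
  by (rule sum.mono_neutral_left) (use assms in \<open>auto simp: Dop_funpow_eq_0\<close>)

lemma lin_op_fps_op: "lin_op (fps_op g Dop)"
proof -
  have Dn: "lin_op (Dop ^^ m)" for m
    by (rule lin_op_funpow[OF lin_op_Dop])
  have "fps_op g Dop (f + h) = fps_op g Dop f + fps_op g Dop h" for f h
  proof -
    define N where "N = max (degree f) (degree h)"
    have "degree (f + h) \<le> N"
      by (simp add: N_def degree_add_le)
    then show ?thesis
      by (simp add: fps_op_eq_sum[of _ N] N_def lin_op_add[OF Dn] smult_add_right sum.distrib)
  qed
  moreover have "fps_op g Dop (smult c f) = smult c (fps_op g Dop f)" for c f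
    by (simp add: fps_op_eq_sum[OF degree_smult_le] fps_op_eq_sum[of f "degree f"]
        lin_op_smult[OF Dn] smult_sum_right mult.commute)
  ultimately show ?thesis
    by (simp add: lin_op_def)
qed

lemma fps_op_Dop_commute: "fps_op g Dop (Dop f) = Dop (fps_op g Dop f)"
proof -
  have "degree (Dop f) \<le> degree f"
    using degree_Dop_funpow_le[of 1 f] by simp
  then show ?thesis
    by (simp add: fps_op_eq_sum fps_op_eq_sum[of f "degree f"] lin_op_sum[OF lin_op_Dop]
        lin_op_smult[OF lin_op_Dop] funpow_swap1)
qed

text \<open>E^a is the inverse of I - aD, so commuting with every E^a, or just with E^1, is the
  same as commuting with D.\<close>

lemma Eop_left_inverse: "Eop a (f - smult (of_real a) (Dop f)) = f"
proof -
  define c :: complex where "c = of_real a"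
  define g where "g = f - smult c (Dop f)"
  have "c * poly (Dop f) c = poly f c - poly f 0"
    using arg_cong[OF x_mult_Dop[of f], of "\<lambda>p. poly p c"] by simp
  then have "poly g c = poly f 0"
    by (simp add: g_def)
  then have "[:0, 1:] * g - [:c * poly g c:]
      = [:0, 1:] * f - smult c ([:0, 1:] * Dop f) - [:c * poly f 0:]"
    by (simp add: g_def algebra_simps)
  also have "\<dots> = [:- c, 1:] * f"
    by (simp add: x_mult_Dop algebra_simps)
       (simp add: poly_eq_iff coeff_pCons poly_0_coeff_0 split: nat.splits)
  finally have "Eop a g = ([:- c, 1:] * f) div [:- c, 1:]"
    unfolding Eop_def c_def[symmetric] by simp
  also have "\<dots> = f"
    by (rule nonzero_mult_div_cancel_left) simp
  finally show ?thesis
    by (simp add: g_def c_def)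
qed

lemma Eop_right_inverse: "Eop a h - smult (of_real a) (Dop (Eop a h)) = h"
proof -
  define c :: complex where "c = of_real a"
  define e where "e = Eop a h"
  define r where "r = [:0, 1:] * h - [:c * poly h c:]"
  have "[:- c, 1:] dvd r"
    by (simp add: r_def poly_eq_0_iff_dvd[symmetric])
  moreover have "e = r div [:- c, 1:]"
    by (simp add: e_def Eop_def r_def c_def)
  ultimately have re: "[:- c, 1:] * e = r"
    by (metis dvd_mult_div_cancel)
  have "[:0, 1:] * (e - smult c (Dop e)) = [:- c, 1:] * e + [:c * poly e 0:]"
    by (simp add: x_mult_Dop algebra_simps)
       (simp add: poly_eq_iff coeff_pCons poly_0_coeff_0 split: nat.splits)
  also have "\<dots> = [:0, 1:] * h - [:c * poly h c:] + [:c * poly e 0:]"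
    by (simp only: re r_def)
  finally have eq:
    "[:0, 1:] * (e - smult c (Dop e)) = [:0, 1:] * h - [:c * poly h c:] + [:c * poly e 0:]" .
  from arg_cong[OF eq, of "\<lambda>p. poly p 0"] have "c * poly e 0 = c * poly h c"
    by simp
  with eq have "[:0, 1:] * (e - smult c (Dop e)) = [:0, 1:] * h"
    by simp
  then show ?thesis
    by (simp add: e_def c_def mult_left_cancel)
qed

lemma commute_Eop_iff_commute_Dop:
  assumes "lin_op T"
  shows "(\<forall>a::real. T \<circ> Eop a = Eop a \<circ> T) \<longleftrightarrow> T \<circ> Dop = Dop \<circ> T"
proof
  assume E: "\<forall>a::real. T \<circ> Eop a = Eop a \<circ> T"
  show "T \<circ> Dop = Dop \<circ> T"
  proof
    fix f
    define g where "g = f - Dop f"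
    have "T f = T (Eop 1 g)"
      using Eop_left_inverse[of 1 f] by (simp add: g_def)
    also have "\<dots> = Eop 1 (T g)"
      using E by (metis comp_apply)
    finally have "T f - Dop (T f) = T g"
      using Eop_right_inverse[of 1 "T g"] by simp
    also have "\<dots> = T f - T (Dop f)"
      by (simp add: g_def lin_op_diff[OF assms])
    finally show "(T \<circ> Dop) f = (Dop \<circ> T) f"
      by simp
  qed
next
  assume "T \<circ> Dop = Dop \<circ> T"
  then have D: "T (Dop g) = Dop (T g)" for g
    by (metis comp_apply)
  show "\<forall>a::real. T \<circ> Eop a = Eop a \<circ> T"
  proof (intro allI ext)
    fix a :: real and h
    define e where "e = Eop a h"
    have "h = e - smult (of_real a) (Dop e)"
      using Eop_right_inverse[of a h] by (simp add: e_def)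
    then have "T h = T e - smult (of_real a) (Dop (T e))"
      by (simp add: lin_op_diff[OF assms] lin_op_smult[OF assms] D)
    then show "(T \<circ> Eop a) h = (Eop a \<circ> T) h"
      using Eop_left_inverse[of a "T e"] by (simp add: e_def)
  qed
qed

section \<open>The coproduct Delta and tensor products of operators\<close>

lemma varX_eq: "varX = [:[:0, 1:]:]"
  by (simp add: varX_def embX_def)

lemma varY_eq: "varY = [:0, 1:]"
  by (simp add: varY_def embY_def map_poly_pCons)

lemma coeff_embY [simp]: "coeff (embY f) j = [:coeff f j:]"
  by (simp add: embY_def coeff_map_poly)

lemma embX_mult: "embX a * q = smult a q"
  by (simp add: embX_def)

lemma Delta_eq_sum: "Delta f = (\<Sum>j\<le>degree f. monom ((Dop ^^ j) f) j)"
proof -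
  define S where "S = (\<Sum>j\<le>degree f. monom ((Dop ^^ j) f) j)"
  have coeff_S: "coeff S j = (Dop ^^ j) f" for j
    by (cases "j \<le> degree f") (auto simp: S_def coeff_sum coeff_monom Dop_funpow_eq_0)
  have "(varX - varY) * S = varX * embX f - varY * embY f"
  proof (rule poly_eqI)
    fix j
    show "coeff ((varX - varY) * S) j = coeff (varX * embX f - varY * embY f) j"
    proof (cases j)
      case 0
      then show ?thesis
        by (simp add: varX_eq varY_eq coeff_S embX_def)
    next
      case (Suc i)
      have "[:0, 1:] * Dop ((Dop ^^ i) f) - (Dop ^^ i) f = - [:coeff f i:]"
        using x_mult_Dop[of "(Dop ^^ i) f"] by (simp add: poly_0_coeff_0 coeff_Dop_funpow)
      then show ?thesis
        using Suc by (simp add: varX_eq varY_eq coeff_S embX_def algebra_simps)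
    qed
  qed
  moreover have "varX - varY \<noteq> 0"
    by (simp add: varX_eq varY_eq)
  ultimately show ?thesis
    unfolding Delta_def S_def[symmetric] by (metis nonzero_mult_div_cancel_left)
qed

lemma coeff_Delta: "coeff (Delta f) j = (Dop ^^ j) f"
  by (cases "j \<le> degree f") (auto simp: Delta_eq_sum coeff_sum coeff_monom Dop_funpow_eq_0)

lemma coeff_coeff_Delta: "coeff (coeff (Delta f) j) i = coeff f (i + j)"
  by (simp add: coeff_Delta coeff_Dop_funpow)

lemma degree_Delta_le: "degree (Delta f) \<le> degree f"
  by (rule degree_le) (simp add: coeff_Delta Dop_funpow_eq_0)

lemma Delta_add: "Delta (f + g) = Delta f + Delta g"
  by (rule poly_eqI) (simp add: coeff_Delta lin_op_add[OF lin_op_funpow[OF lin_op_Dop]])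

lemma Delta_smult: "Delta (smult c f) = smult [:c:] (Delta f)"
  by (rule poly_eqI) (simp add: coeff_Delta lin_op_smult[OF lin_op_funpow[OF lin_op_Dop]])

lemma tens_eq_sum:
  assumes S: "lin_op S" and N: "degree q \<le> N"
  shows "tens S T q = (\<Sum>j\<le>N. [:S (coeff q j):] * embY (T (monom 1 j)))"
proof -
  have inner: "(\<Sum>i\<le>degree p. smult [:coeff p i:] (embX (S (monom 1 i)) * E)) = [:S p:] * E"
    for p E
  proof -
    have "(\<Sum>i\<le>degree p. smult [:coeff p i:] (embX (S (monom 1 i)) * E))
        = [:\<Sum>i\<le>degree p. smult (coeff p i) (S (monom 1 i)):] * E"
      by (simp add: embX_def smult_sum)
    also have "(\<Sum>i\<le>degree p. smult (coeff p i) (S (monom 1 i)))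
        = S (\<Sum>i\<le>degree p. smult (coeff p i) (monom 1 i))"
      by (simp add: lin_op_sum_smult[OF S])
    also have "(\<Sum>i\<le>degree p. smult (coeff p i) (monom 1 i)) = p"
      using poly_as_sum_of_monoms[of p] by (simp add: smult_monom)
    finally show ?thesis .
  qed
  have "tens S T q = (\<Sum>j\<le>degree q. [:S (coeff q j):] * embY (T (monom 1 j)))"
    unfolding tens_def by (simp add: inner)
  also have "\<dots> = (\<Sum>j\<le>N. [:S (coeff q j):] * embY (T (monom 1 j)))"
    by (rule sum.mono_neutral_left) (use N in \<open>auto simp: coeff_eq_0 lin_op_0[OF S]\<close>)
  finally show ?thesis .
qed

lemma coeff_tens_id: "lin_op S \<Longrightarrow> coeff (tens S id q) j = S (coeff q j)"
  by (cases "j \<le> degree q")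
     (auto simp: tens_eq_sum[OF _ order.refl] embY_def map_poly_monom smult_monom coeff_sum
       coeff_monom coeff_eq_0 lin_op_0)

lemma tens_add: "lin_op S \<Longrightarrow> tens S T (q1 + q2) = tens S T q1 + tens S T q2"
  using tens_eq_sum[of S "q1 + q2" "max (degree q1) (degree q2)" T]
    tens_eq_sum[of S q1 "max (degree q1) (degree q2)" T]
    tens_eq_sum[of S q2 "max (degree q1) (degree q2)" T]
  by (simp add: degree_add_le lin_op_add smult_add_left sum.distrib)

lemma tens_smult: "lin_op S \<Longrightarrow> tens S T (smult [:c:] q) = smult [:c:] (tens S T q)"
  by (simp add: tens_eq_sum[OF _ degree_smult_le] tens_eq_sum[of S q "degree q"] lin_op_smult
      smult_sum_right)

lemma linear_eq_on_monomials:
  fixes F G :: "complex poly \<Rightarrow> complex poly poly"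
  assumes "\<And>f g. F (f + g) = F f + F g" "\<And>c f. F (smult c f) = smult [:c:] (F f)"
    and "\<And>f g. G (f + g) = G f + G g" "\<And>c f. G (smult c f) = smult [:c:] (G f)"
    and "\<And>n. F (monom 1 n) = G (monom 1 n)"
  shows "F f = G f"
proof -
  have "F 0 = 0" "G 0 = 0"
    using assms(1)[of 0 0] assms(3)[of 0 0] by simp_all
  then have sums: "F (\<Sum>i\<in>S. smult (c i) (monom 1 i)) = (\<Sum>i\<in>S. smult [:c i:] (F (monom 1 i)))"
      "G (\<Sum>i\<in>S. smult (c i) (monom 1 i)) = (\<Sum>i\<in>S. smult [:c i:] (G (monom 1 i)))" for S c
    by (induction S rule: infinite_finite_induct) (auto simp: assms(1-4))
  have "f = (\<Sum>i\<le>degree f. smult (coeff f i) (monom 1 i))"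
    using poly_as_sum_of_monoms[of f] by (simp add: smult_monom)
  then show ?thesis
    by (metis (no_types, lifting) sums assms(5) sum.cong)
qed

lemma tens_id_Delta_iff_commute_Dop:
  assumes "lin_op T"
  shows "(\<forall>f. tens T id (Delta f) = Delta (T f)) \<longleftrightarrow> T \<circ> Dop = Dop \<circ> T"
proof -
  have "(\<forall>f. tens T id (Delta f) = Delta (T f)) \<longleftrightarrow> (\<forall>f j. T ((Dop ^^ j) f) = (Dop ^^ j) (T f))"
    by (simp add: poly_eq_iff coeff_tens_id[OF assms] coeff_Delta)
  also have "\<dots> \<longleftrightarrow> T \<circ> Dop = Dop \<circ> T"
  proof
    assume "\<forall>f j. T ((Dop ^^ j) f) = (Dop ^^ j) (T f)"
    from this[rule_format, where j = 1] show "T \<circ> Dop = Dop \<circ> T"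
      by (simp add: fun_eq_iff)
  next
    assume "T \<circ> Dop = Dop \<circ> T"
    then show "\<forall>f j. T ((Dop ^^ j) f) = (Dop ^^ j) (T f)"
      using funpow_commute[of T Dop 1] by (simp add: fun_eq_iff)
  qed
  finally show ?thesis .
qed

section \<open>Substituting x + y\<close>

definition is_ring_hom :: "('a::comm_ring_1 \<Rightarrow> 'b::comm_ring_1) \<Rightarrow> bool" where
  "is_ring_hom g \<longleftrightarrow> g 0 = 0 \<and> g 1 = 1 \<and> (\<forall>a b. g (a + b) = g a + g b) \<and> (\<forall>a b. g (a * b) = g a * g b)"

lemma is_ring_homD:
  assumes "is_ring_hom g"
  shows "g 0 = 0" "g 1 = 1" "g (a + b) = g a + g b" "g (a * b) = g a * g b"
  using assms by (auto simp: is_ring_hom_def)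

lemma is_ring_hom_sum: "is_ring_hom g \<Longrightarrow> g (\<Sum>i\<in>S. f i) = (\<Sum>i\<in>S. g (f i))"
  by (induction S rule: infinite_finite_induct) (auto simp: is_ring_homD)

lemma is_ring_hom_comp: "is_ring_hom g \<Longrightarrow> is_ring_hom h \<Longrightarrow> is_ring_hom (g \<circ> h)"
  by (simp add: is_ring_hom_def)

lemma is_ring_hom_poly: "is_ring_hom (\<lambda>p. poly p s)"
  by (simp add: is_ring_hom_def)

lemma is_ring_hom_pCons: "is_ring_hom (\<lambda>c. [:c:])"
  by (simp add: is_ring_hom_def one_pCons)

lemma map_poly_add_hom: "is_ring_hom g \<Longrightarrow> map_poly g (p + q) = map_poly g p + map_poly g q"
  by (rule poly_eqI) (simp add: coeff_map_poly is_ring_homD)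

lemma map_poly_mult_hom: "is_ring_hom g \<Longrightarrow> map_poly g (p * q) = map_poly g p * map_poly g q"
proof (induction p)
  case (pCons a p)
  then have "g 0 = 0"
    by (simp add: is_ring_homD)
  with pCons show ?case
    by (simp add: map_poly_add_hom map_poly_smult map_poly_pCons is_ring_homD)
qed simp

lemma is_ring_hom_map_poly: "is_ring_hom g \<Longrightarrow> is_ring_hom (map_poly g)"
  by (simp add: is_ring_hom_def map_poly_add_hom map_poly_mult_hom map_poly_1')

lemma is_ring_hom_embX: "is_ring_hom embX"
  using is_ring_hom_pCons by (simp add: embX_def[abs_def])

lemma is_ring_hom_embY: "is_ring_hom embY"
  using is_ring_hom_map_poly[OF is_ring_hom_pCons] by (simp add: embY_def[abs_def])

lemma is_ring_hom_eval_sum2: "is_ring_hom eval_sum2"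
proof -
  have eq: "eval_sum2 = (\<lambda>p. poly p (varX + varY)) \<circ> map_poly ((\<lambda>c. [:c:]) \<circ> (\<lambda>c. [:c:]))"
    by (simp add: eval_sum2_def[abs_def] o_def)
  show ?thesis
    unfolding eq by (intro is_ring_hom_comp is_ring_hom_poly is_ring_hom_map_poly is_ring_hom_pCons)
qed

definition fps_map :: "('a \<Rightarrow> 'b) \<Rightarrow> 'a fps \<Rightarrow> 'b fps" where
  "fps_map g F = Abs_fps (\<lambda>n. g (F $ n))"

lemma fps_map_nth [simp]: "fps_map g F $ n = g (F $ n)"
  by (simp add: fps_map_def)

lemma fps_map_Abs_fps: "Abs_fps (\<lambda>n. g (F n)) = fps_map g (Abs_fps F)"
  by (rule fps_ext) simp

lemma fps_map_mult: "is_ring_hom g \<Longrightarrow> fps_map g (F * G) = fps_map g F * fps_map g G"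
  by (rule fps_ext) (simp add: fps_mult_nth is_ring_hom_sum is_ring_homD)

lemma fps_map_1: "is_ring_hom g \<Longrightarrow> fps_map g 1 = 1"
  by (rule fps_ext) (simp add: is_ring_homD)

lemma eval_sum2_linear:
  assumes "degree q \<le> 1"
  shows "eval_sum2 q = embX q + embY q - [:[:coeff q 0:]:]"
proof -
  from assms have q: "q = [:coeff q 0, coeff q 1:]"
    by (simp add: poly_eq_iff coeff_pCons coeff_eq_0 split: nat.splits)
  show ?thesis
    by (subst (1 2 3) q) (simp add: eval_sum2_def embX_def embY_def map_poly_pCons varX_eq varY_eq
        poly_eq_iff coeff_pCons split: nat.splits)
qed

text \<open>Setting y = x turns m(x + y) = m(x) + m(y) into m(2x) = 2m(x).\<close>

lemma additive_poly_coeff_eq_0: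
  assumes "eval_sum2 m = embX m + embY m" and "j \<noteq> 1"
  shows "coeff m j = 0"
proof -
  have diagonal_sum2: "poly (eval_sum2 p) [:0, 1:] = pcompose p [:0, 2:]" for p
  proof (induction p)
    case (pCons a p)
    have "poly (varX + varY) [:0, 1:] = [:0, 2:]"
      by (simp add: varX_eq varY_eq)
    with pCons show ?case
      by (simp add: eval_sum2_def map_poly_pCons pcompose_pCons)
  qed (simp add: eval_sum2_def)
  have diagonal_Y: "poly (embY p) [:0, 1:] = pcompose p [:0, 1:]" for p
    by (induction p) (simp_all add: embY_def map_poly_pCons pcompose_pCons)
  have "pcompose m [:0, 2:] = m + m"
    using arg_cong[OF assms(1), of "\<lambda>q. poly q [:0, 1:]"]
    by (simp add: diagonal_sum2 diagonal_Y embX_def poly_eq_iff coeff_pcompose_linear)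
  then have "(2::complex) ^ j * coeff m j = 2 * coeff m j"
    by (metis coeff_add coeff_pcompose_linear mult_2)
  moreover have "(2::complex) ^ j \<noteq> 2"
  proof
    assume "(2::complex) ^ j = 2"
    then have "(2::nat) ^ j = 2 ^ 1"
      by (metis of_nat_eq_iff of_nat_numeral of_nat_power power_one_right)
    then have "j = 1"
      using power_inject_exp[of "2::nat" j 1] by presburger
    with assms(2) show False ..
  qed
  ultimately show ?thesis
    by (metis mult_cancel_right)
qed

lemma reciprocal_identity_iff:
  fixes a b c a' b' c' :: "'a::comm_ring_1"
  assumes a: "a * a' = 1" and b: "b * b' = 1" and c: "c * c' = 1"
  shows "c * (a + b - a * b) = a * b \<longleftrightarrow> c' = a' + b' - 1"
proof
  assume eq: "c * (a + b - a * b) = a * b"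
  have "a' + b' - 1 = (c * c') * ((a * a') * b' + (b * b') * a' - (a * a') * (b * b'))"
    by (simp add: a b c)
  also have "\<dots> = c' * a' * b' * (c * (a + b - a * b))"
    by (simp add: algebra_simps)
  also have "\<dots> = (a * a') * (b * b') * c'"
    by (simp only: eq) (simp add: algebra_simps)
  finally show "c' = a' + b' - 1"
    by (simp add: a b)
next
  assume c': "c' = a' + b' - 1"
  have "a * b = a * b * (c * c')"
    by (simp add: c)
  also have "\<dots> = c * (b * (a * a') + a * (b * b') - a * b)"
    by (simp add: c' algebra_simps)
  finally show "c * (a + b - a * b) = a * b"
    by (simp add: a b algebra_simps)
qed

lemma fps_map_eval_sum2_eq_iff:
  assumes "L $ 0 = 1"
  shows "fps_map eval_sum2 L = fps_map embX L + fps_map embY L - 1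
    \<longleftrightarrow> (\<exists>u. u $ 0 = 0 \<and> L = 1 - Abs_fps (\<lambda>n. [:0, u $ n:]))"
proof
  assume sum: "fps_map eval_sum2 L = fps_map embX L + fps_map embY L - 1"
  define u where "u = Abs_fps (\<lambda>n. - coeff (L $ n) 1)"
  have "L $ n = (1 - Abs_fps (\<lambda>n. [:0, u $ n:])) $ n" for n
  proof (cases n)
    case (Suc k)
    from sum have "fps_map eval_sum2 L $ n = (fps_map embX L + fps_map embY L - 1) $ n"
      by simp
    with Suc have "eval_sum2 (L $ n) = embX (L $ n) + embY (L $ n)"
      by simp
    then have "coeff (L $ n) j = 0" if "j \<noteq> 1" for j
      using additive_poly_coeff_eq_0 that by blast
    with Suc show ?thesis
      by (simp add: u_def poly_eq_iff coeff_pCons split: nat.splits)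
  qed (simp add: assms u_def)
  moreover have "u $ 0 = 0"
    by (simp add: u_def assms)
  ultimately show "\<exists>u. u $ 0 = 0 \<and> L = 1 - Abs_fps (\<lambda>n. [:0, u $ n:])"
    by (auto simp: fps_eq_iff)
next
  assume "\<exists>u. u $ 0 = 0 \<and> L = 1 - Abs_fps (\<lambda>n. [:0, u $ n:])"
  then obtain u where u0: "u $ 0 = 0" and L: "L = 1 - Abs_fps (\<lambda>n. [:0, u $ n:])"
    by blast
  show "fps_map eval_sum2 L = fps_map embX L + fps_map embY L - 1"
  proof (rule fps_ext)
    fix n
    have "degree (L $ n) \<le> 1" "coeff (L $ n) 0 = (if n = 0 then 1 else 0)"
      using u0 by (cases n; simp add: L one_pCons)+
    then show "fps_map eval_sum2 L $ n = (fps_map embX L + fps_map embY L - 1) $ n"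
      by (simp add: eval_sum2_linear one_pCons)
  qed
qed

section \<open>Words in the free product C<x,y>\<close>

lemma nc_sum_apply: "nc_sum S g w = (\<Sum>s\<in>S. g s w)"
  by (simp add: nc_sum_def)

lemma nc_smult_apply: "nc_smult c p w = c * p w"
  by (simp add: nc_smult_def)

lemma nc_add_apply: "nc_add p q w = p w + q w"
  by (simp add: nc_add_def)

lemma nc_mult_Nil: "nc_mult p q [] = p [] * q []"
  by (simp add: nc_mult_def)

lemma nc_mult_Cons: "nc_mult p q (c # w) = p [] * q (c # w) + nc_mult (\<lambda>u. p (c # u)) q w"
  unfolding nc_mult_def length_Cons by (subst sum.atMost_Suc_shift) simp

lemma nc_mult_zero: "nc_mult (\<lambda>_. 0) q w = 0"
  by (simp add: nc_mult_def)

lemma nc_mult_unit: "nc_mult (\<lambda>u. if u = [] then a else 0) q w = a * q w"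
  by (cases w) (simp_all add: nc_mult_Nil nc_mult_Cons nc_mult_zero)

lemma nc_mult_var:
  "nc_mult (nc_var b) q w = (case w of [] \<Rightarrow> 0 | c # w' \<Rightarrow> if c = b then q w' else 0)"
proof (cases w)
  case (Cons c w')
  have "(\<lambda>u. nc_var b (c # u)) = (\<lambda>u. if u = [] then (if c = b then 1 else 0) else 0)"
    by (auto simp: nc_var_def fun_eq_iff)
  with Cons show ?thesis
    by (simp add: nc_mult_Cons nc_var_def nc_mult_unit)
qed (simp add: nc_mult_Nil nc_var_def)

lemma nc_mult_sum_vars:
  "nc_mult (nc_add (nc_var False) (nc_var True)) q w = (case w of [] \<Rightarrow> 0 | c # w' \<Rightarrow> q w')"
proof (cases w)
  case (Cons c w')
  have "(\<lambda>u. nc_add (nc_var False) (nc_var True) (c # u)) = (\<lambda>u. if u = [] then 1 else 0)"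
    by (auto simp: nc_var_def nc_add_def fun_eq_iff)
  with Cons show ?thesis
    by (simp add: nc_mult_Cons nc_var_def nc_add_def nc_mult_unit)
qed (simp add: nc_mult_Nil nc_var_def nc_add_def)

lemma nc_pow_var: "nc_pow (nc_var b) m w = (if w = replicate m b then 1 else 0)"
proof (induction m arbitrary: w)
  case (Suc m)
  then show ?case
    by (cases w) (auto simp: nc_mult_var)
qed (simp add: nc_one_def)

lemma nc_pow_sum_vars:
  "nc_pow (nc_add (nc_var False) (nc_var True)) m w = (if length w = m then 1 else 0)"
proof (induction m arbitrary: w)
  case (Suc m)
  then show ?case
    by (cases w) (auto simp: nc_mult_sum_vars)
qed (simp add: nc_one_def)

lemma Delta_ast_apply: "Delta_ast f w = coeff f (length w)"
proof -
  have "Delta_ast f w = (\<Sum>n\<le>degree f. if n = length w then coeff f n else 0)"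
    unfolding Delta_ast_def nc_eval_def nc_sum_apply
    by (intro sum.cong) (auto simp: nc_smult_apply nc_pow_sum_vars)
  then show ?thesis
    by (auto simp: coeff_eq_0)
qed

lemma nc_emb_apply: "nc_emb b f w = (if set w \<subseteq> {b} then coeff f (length w) else 0)"
proof -
  have "w = replicate n b \<longleftrightarrow> n = length w \<and> set w \<subseteq> {b}" for n
    by (auto simp: replicate_length_same[symmetric] intro: replicate_eqI)
  then have "nc_emb b f w = (\<Sum>n\<le>degree f. if n = length w \<and> set w \<subseteq> {b} then coeff f n else 0)"
    unfolding nc_emb_def nc_eval_def nc_sum_apply
    by (intro sum.cong) (auto simp: nc_smult_apply nc_pow_var)
  then show ?thesis
    by (auto simp: coeff_eq_0)
qed

text \<open>Multiplying by a polynomial in the single letter b only sees the prefixes of w made of b's.\<close>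

lemma nc_mult_nc_emb:
  "nc_mult (nc_emb b f) q w = (\<Sum>t\<le>length (takeWhile (\<lambda>c. c = b) w). coeff f t * q (drop t w))"
proof (induction w arbitrary: f)
  case Nil
  then show ?case
    by (simp add: nc_mult_Nil nc_emb_apply)
next
  case (Cons c w)
  have tail: "(\<lambda>u. nc_emb b f (c # u)) = (if c = b then nc_emb b (Dop f) else (\<lambda>_. 0))"
    by (auto simp: nc_emb_apply)
  show ?case
  proof (cases "c = b")
    case True
    with tail have "(\<lambda>u. nc_emb b f (c # u)) = nc_emb b (Dop f)"
      by simp
    then have "nc_mult (nc_emb b f) q (c # w) = coeff f 0 * q (c # w) + nc_mult (nc_emb b (Dop f)) q w"
      by (simp only: nc_mult_Cons) (simp add: nc_emb_apply)
    then show ?thesis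
      using Cons.IH[of "Dop f"] unfolding True by (simp add: sum.atMost_Suc_shift del: sum.atMost_Suc)
  next
    case False
    then show ?thesis
      by (simp add: nc_mult_Cons tail nc_mult_zero nc_emb_apply)
  qed
qed

fun runs_word :: "bool \<Rightarrow> nat list \<Rightarrow> bool list" where
  "runs_word b [] = []"
| "runs_word b (l # ls) = replicate l b @ runs_word (\<not> b) ls"

lemma length_runs_word [simp]: "length (runs_word b ls) = sum_list ls"
  by (induction ls arbitrary: b) auto

lemma runs_word_eq_Nil_iff: "\<forall>l\<in>set ls. l \<ge> 1 \<Longrightarrow> runs_word b ls = [] \<longleftrightarrow> ls = []"
  by (cases ls) auto

lemma hd_runs_word: "ls \<noteq> [] \<Longrightarrow> \<forall>l\<in>set ls. l \<ge> 1 \<Longrightarrow> hd (runs_word b ls) = b"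
  by (cases ls) (auto simp: hd_append hd_replicate)

lemma takeWhile_replicate_append:
  "rest = [] \<or> hd rest \<noteq> b \<Longrightarrow> takeWhile (\<lambda>c. c = b) (replicate k b @ rest) = replicate k b"
  by (induction k) (cases rest; auto)+

lemma dropWhile_replicate_append:
  "rest = [] \<or> hd rest \<noteq> b \<Longrightarrow> dropWhile (\<lambda>c. c = b) (replicate k b @ rest) = rest"
  by (induction k) (cases rest; auto)+

lemma runs_word_Cons_split:
  assumes "\<forall>l\<in>set (l # ls). l \<ge> 1"
  shows "takeWhile (\<lambda>c. c = b) (runs_word b (l # ls)) = replicate l b"
    and "dropWhile (\<lambda>c. c = b) (runs_word b (l # ls)) = runs_word (\<not> b) ls"
proof -
  have "runs_word (\<not> b) ls = [] \<or> hd (runs_word (\<not> b) ls) \<noteq> b"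
    using assms hd_runs_word[of ls "\<not> b"] runs_word_eq_Nil_iff[of ls "\<not> b"] by auto
  then show "takeWhile (\<lambda>c. c = b) (runs_word b (l # ls)) = replicate l b"
    and "dropWhile (\<lambda>c. c = b) (runs_word b (l # ls)) = runs_word (\<not> b) ls"
    by (simp_all add: takeWhile_replicate_append dropWhile_replicate_append)
qed

lemma runs_word_surj: "\<exists>ls. (\<forall>l\<in>set ls. l \<ge> 1) \<and> w = runs_word (hd w) ls"
proof (induction "length w" arbitrary: w rule: less_induct)
  case less
  show ?case
  proof (cases w)
    case Nil
    then show ?thesis
      by (intro exI[of _ "[]"]) simp
  next
    case (Cons b w')
    define k where "k = length (takeWhile (\<lambda>c. c = b) w')"
    define rest where "rest = dropWhile (\<lambda>c. c = b) w'"
    have "length rest < length w"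
      using Cons by (simp add: rest_def le_imp_less_Suc length_dropWhile_le)
    then obtain ls where ls: "\<forall>l\<in>set ls. l \<ge> 1" "rest = runs_word (hd rest) ls"
      using less by blast
    have "rest = [] \<or> hd rest = (\<not> b)"
      unfolding rest_def by (induction w') auto
    then have "rest = runs_word (\<not> b) ls"
    proof
      assume "rest = []"
      then have "ls = []"
        using ls runs_word_eq_Nil_iff by metis
      with \<open>rest = []\<close> show ?thesis
        by simp
    next
      assume "hd rest = (\<not> b)"
      then show ?thesis
        by (subst ls(2)) simp
    qed
    moreover have "takeWhile (\<lambda>c. c = b) w' = replicate k b"
      unfolding k_def by (induction w') auto
    ultimately have "w = runs_word (hd w) (Suc k # ls)"
      using Cons takeWhile_dropWhile_id[of "\<lambda>c. c = b" w'] by (simp add: rest_def)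
    moreover have "\<forall>l\<in>set (Suc k # ls). l \<ge> 1"
      using ls(1) by simp
    ultimately show ?thesis
      by blast
  qed
qed

lemma runs_word_inj:
  assumes "\<forall>i\<in>set is. i \<ge> 1" "\<forall>i\<in>set is'. i \<ge> 1" "runs_word b is = runs_word b is'"
  shows "is = is'"
  using assms
proof (induction "is" arbitrary: b is')
  case Nil
  then show ?case
    using runs_word_eq_Nil_iff by metis
next
  case (Cons i r)
  then obtain i' r' where is': "is' = i' # r'"
    by (cases is') auto
  have "replicate i b = replicate i' b" and "runs_word (\<not> b) r = runs_word (\<not> b) r'"
    using runs_word_Cons_split[of i r b] runs_word_Cons_split[of i' r' b] Cons.prems is' by auto
  with Cons show ?case
    by (simp add: is')
qed

definition compositions :: "nat \<Rightarrow> nat \<Rightarrow> nat list set" where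
  "compositions k n = {is. length is = k \<and> (\<forall>i\<in>set is. i \<ge> 1) \<and> sum_list is = n}"

lemma sum_list_ge_length: "\<forall>i\<in>set is. (i::nat) \<ge> 1 \<Longrightarrow> sum_list is \<ge> length is"
  by (induction "is") auto

lemma finite_compositions: "finite (compositions k n)"
proof (rule finite_subset)
  show "compositions k n \<subseteq> {xs. set xs \<subseteq> {0..n} \<and> length xs = k}"
    by (auto simp: compositions_def intro: member_le_sum_list[THEN order.trans])
qed (rule finite_lists_length_eq, simp)

lemma compositions_eq_empty: "n < k \<Longrightarrow> compositions k n = {}"
  using sum_list_ge_length by (fastforce simp: compositions_def)

lemma compositions_0: "compositions 0 n = (if n = 0 then {[]} else {})"
  by (auto simp: compositions_def)

lemma sum_compositions_Suc:
  "(\<Sum>is\<in>compositions (Suc r) n. g is) = (\<Sum>i\<in>{1..n}. \<Sum>is\<in>compositions r (n - i). g (i # is))"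
proof -
  have "compositions (Suc r) n = (\<lambda>(i, is). i # is) ` (SIGMA i:{1..n}. compositions r (n - i))"
    by (auto simp: compositions_def image_iff length_Suc_conv)
  moreover have "inj_on (\<lambda>(i, is). i # is) (SIGMA i:{1..n}. compositions r (n - i))"
    by (auto simp: inj_on_def)
  ultimately show ?thesis
    by (simp add: sum.reindex sum.Sigma finite_compositions split_def)
qed

lemma bij_betw_runs_word:
  assumes "m \<ge> 1"
  shows "bij_betw (\<lambda>(b, is). runs_word b is) (UNIV \<times> (\<Union>k\<in>{1..m}. compositions k m))
    {w. length w = m}"
proof (rule bij_betwI')
  fix x y :: "bool \<times> nat list"
  assume "x \<in> UNIV \<times> (\<Union>k\<in>{1..m}. compositions k m)" "y \<in> UNIV \<times> (\<Union>k\<in>{1..m}. compositions k m)"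
  moreover obtain b "is" b' is' where xy: "x = (b, is)" "y = (b', is')"
    by (cases x, cases y)
  ultimately have "is \<noteq> []" "\<forall>i\<in>set is. i \<ge> 1" "is' \<noteq> []" "\<forall>i\<in>set is'. i \<ge> 1"
    by (auto simp: compositions_def)
  then show "((\<lambda>(b, is). runs_word b is) x = (\<lambda>(b, is). runs_word b is) y) = (x = y)"
    using hd_runs_word[of "is" b] hd_runs_word[of is' b'] runs_word_inj[of "is" is' b] by (auto simp: xy)
next
  fix w :: "bool list"
  assume w: "w \<in> {w. length w = m}"
  obtain ls where ls: "\<forall>l\<in>set ls. l \<ge> 1" "w = runs_word (hd w) ls"
    using runs_word_surj by blast
  then have "sum_list ls = m"
    using w by (metis length_runs_word mem_Collect_eq)
  moreover from this have "length ls \<in> {1..m}"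
    using assms ls(1) sum_list_ge_length[OF ls(1)] by (cases ls) auto
  ultimately have "(hd w, ls) \<in> UNIV \<times> (\<Union>k\<in>{1..m}. compositions k m)"
    using ls(1) by (auto simp: compositions_def)
  moreover have "w = (\<lambda>(b, is). runs_word b is) (hd w, ls)"
    unfolding prod.case by (rule ls(2))
  ultimately show "\<exists>x\<in>UNIV \<times> (\<Union>k\<in>{1..m}. compositions k m). w = (\<lambda>(b, is). runs_word b is) x"
    by blast
qed (auto simp: compositions_def)

lemma word_img_runs_word:
  "\<forall>i\<in>set is. i \<ge> 1 \<Longrightarrow> word_img W W (runs_word b is) = alt_prod (\<lambda>n. W (monom 1 n)) b is"
proof (induction "is" arbitrary: b)
  case (Cons i r)
  then obtain i' where i': "i = Suc i'"
    by (cases i) auto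
  have "runs_word b (i # r) = b # (replicate i' b @ runs_word (\<not> b) r)"
    by (simp add: i')
  then show ?case
    using runs_word_Cons_split[of i r b] Cons by (simp add: i')
qed simp

definition alternating_expansion :: "(nat \<Rightarrow> complex poly) \<Rightarrow> nat \<Rightarrow> ncpoly" where
  "alternating_expansion Q n = nc_sum {1..n} (\<lambda>k. nc_sum (compositions k n)
     (\<lambda>is. nc_add (alt_prod Q False is) (alt_prod Q True is)))"

lemma sum_word_img:
  assumes "m \<ge> 1"
  shows "nc_sum {w. length w = m} (word_img W W) = alternating_expansion (\<lambda>n. W (monom 1 n)) m"
proof
  fix v
  let ?C = "\<Union>k\<in>{1..m}. compositions k m" and ?Q = "\<lambda>n. W (monom 1 n)"
  have "nc_sum {w. length w = m} (word_img W W) v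
      = (\<Sum>x\<in>UNIV \<times> ?C. word_img W W (case x of (b, is) \<Rightarrow> runs_word b is) v)"
    unfolding nc_sum_apply by (rule sum.reindex_bij_betw[OF bij_betw_runs_word[OF assms], symmetric])
  also have "\<dots> = (\<Sum>(b, is)\<in>UNIV \<times> ?C. alt_prod ?Q b is v)"
    by (rule sum.cong) (auto simp: compositions_def word_img_runs_word)
  also have "\<dots> = (\<Sum>b\<in>UNIV. \<Sum>is\<in>?C. alt_prod ?Q b is v)"
    by (rule sum.cartesian_product[symmetric])
  also have "\<dots> = (\<Sum>is\<in>?C. alt_prod ?Q False is v + alt_prod ?Q True is v)"
    by (simp add: UNIV_bool sum.distrib add.commute)
  also have "\<dots> = alternating_expansion ?Q m v"
  proof -
    have "\<forall>i\<in>{1..m}. \<forall>j\<in>{1..m}. i \<noteq> j \<longrightarrow> compositions i m \<inter> compositions j m = {}"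
      by (auto simp: compositions_def)
    then show ?thesis
      unfolding alternating_expansion_def nc_sum_apply nc_add_apply
      by (intro sum.UNION_disjoint) (auto simp: finite_compositions)
  qed
  finally show "nc_sum {w. length w = m} (word_img W W) v = alternating_expansion ?Q m v" .
qed

lemma free_op_Delta_ast:
  "free_op W1 W2 (Delta_ast f) v
    = (\<Sum>m\<le>degree f. coeff f m * nc_sum {w. length w = m} (word_img W1 W2) v)"
proof -
  have fin: "finite {w :: bool list. length w = m}" for m
    using finite_lists_length_eq[of "UNIV :: bool set" m] by simp
  have "free_op W1 W2 (Delta_ast f) v
      = (\<Sum>w\<in>{w. Delta_ast f w \<noteq> 0}. Delta_ast f w * word_img W1 W2 w v)"
    by (simp add: free_op_def nc_sum_apply nc_smult_apply)
  also have "\<dots> = (\<Sum>w\<in>(\<Union>m\<le>degree f. {w. length w = m}). Delta_ast f w * word_img W1 W2 w v)"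
    by (rule sum.mono_neutral_left) (auto simp: fin Delta_ast_apply intro: le_degree)
  also have "\<dots> = (\<Sum>m\<le>degree f. \<Sum>w\<in>{w. length w = m}. Delta_ast f w * word_img W1 W2 w v)"
    by (rule sum.UNION_disjoint) (auto simp: fin)
  finally show ?thesis
    by (simp add: nc_sum_apply Delta_ast_apply sum_distrib_left)
qed

fun coeff_prod :: "(nat \<Rightarrow> complex poly) \<Rightarrow> nat list \<Rightarrow> nat list \<Rightarrow> complex" where
  "coeff_prod Q [] [] = 1"
| "coeff_prod Q (i # is) (l # ls) = coeff (Q i) l * coeff_prod Q is ls"
| "coeff_prod Q _ _ = 0"

lemma alt_prod_runs_word:
  assumes "\<forall>i\<in>set is. coeff (Q i) 0 = 0" and "\<forall>l\<in>set ls. l \<ge> 1"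
  shows "alt_prod Q b is (runs_word c ls) =
    (if length is = length ls \<and> (ls \<noteq> [] \<longrightarrow> b = c) then coeff_prod Q is ls else 0)"
  using assms
proof (induction "is" arbitrary: b c ls)
  case Nil
  then show ?case
    by (auto simp: nc_one_def runs_word_eq_Nil_iff)
next
  case (Cons i r)
  show ?case
  proof (cases ls)
    case Nil
    with Cons.prems show ?thesis
      by (simp add: nc_mult_nc_emb)
  next
    case ls: (Cons l ls')
    from Cons.prems ls obtain l' where l: "l = Suc l'" and pos: "\<forall>l\<in>set ls'. l \<ge> 1"
      by (cases l) auto
    show ?thesis
    proof (cases "b = c")
      case False
      with Cons.prems show ?thesis
        by (simp add: nc_mult_nc_emb ls l)
    next
      case True
      then have c: "c = b" ..
      have k: "takeWhile (\<lambda>c. c = b) (runs_word b ls) = replicate l b"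
        using runs_word_Cons_split(1)[of l ls' b] Cons.prems by (simp add: ls)
      have "alt_prod Q (\<not> b) r (drop t (runs_word b ls)) = 0" if "t < l" for t
      proof -
        have "drop t (runs_word b ls) = runs_word b ((l - t) # ls')"
          using that by (simp add: ls)
        then show ?thesis
          using Cons.IH[of "(l - t) # ls'" "\<not> b" b] Cons.prems pos that by simp
      qed
      then have "(\<Sum>t\<le>l. coeff (Q i) t * alt_prod Q (\<not> b) r (drop t (runs_word b ls)))
          = (\<Sum>t\<le>l. if t = l then coeff (Q i) l * alt_prod Q (\<not> b) r (runs_word (\<not> b) ls') else 0)"
        by (intro sum.cong) (auto simp: ls)
      then have "alt_prod Q b (i # r) (runs_word c ls)
          = coeff (Q i) l * alt_prod Q (\<not> b) r (runs_word (\<not> b) ls')"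
        unfolding c by (simp only: alt_prod.simps nc_mult_nc_emb k length_replicate) simp
      then show ?thesis
        using Cons.IH[of ls' "\<not> b" "\<not> b"] Cons.prems pos True by (simp add: ls)
    qed
  qed
qed

section \<open>Monic families and their generating function\<close>

locale monic_family =
  fixes P :: "nat \<Rightarrow> complex poly"
  assumes degree_P [simp]: "degree (P n) = n"
    and lead_coeff_P: "lead_coeff (P n) = 1"
    and P_at_0: "n \<ge> 1 \<Longrightarrow> poly (P n) 0 = 0"
begin

lemma coeff_P_self [simp]: "coeff (P n) n = 1"
  using lead_coeff_P[of n] by simp

lemma coeff_P_eq_0: "n < l \<Longrightarrow> coeff (P n) l = 0"
  by (simp add: coeff_eq_0)

lemma P_0 [simp]: "P 0 = 1"
  using degree_0_id[of "P 0"] by (simp add: one_pCons)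

lemma coeff_P_0: "coeff (P n) 0 = (if n = 0 then 1 else 0)"
  using P_at_0 by (cases n) (auto simp: poly_0_coeff_0)

definition coeff_series :: "nat \<Rightarrow> complex fps" where
  "coeff_series l = Abs_fps (\<lambda>n. coeff (P n) l)"

lemma coeff_series_nth [simp]: "coeff_series l $ n = coeff (P n) l"
  by (simp add: coeff_series_def)

lemma coeff_series_0 [simp]: "coeff_series 0 = 1"
  by (simp add: fps_eq_iff coeff_P_0)

lemma coeff_series_1_nth: "coeff_series 1 $ 0 = 0" "coeff_series 1 $ 1 = 1"
  by (simp_all add: coeff_P_eq_0)

text \<open>H(x,z) = sum_l c_l(z) x^l with c_l = coeff_series l, so geometric means c_l = c_1^l,
  i.e. H = 1/(1 - c_1 x).\<close>

definition geometric :: bool where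
  "geometric \<longleftrightarrow> (\<forall>i j. coeff_series (i + j) = coeff_series i * coeff_series j)"

lemma geometric_imp_coeff_series_power:
  assumes "geometric"
  shows "coeff_series l = coeff_series 1 ^ l"
proof (induction l)
  case (Suc l)
  have "coeff_series (Suc l) = coeff_series 1 * coeff_series l"
    using assms unfolding geometric_def by (metis plus_1_eq_Suc)
  with Suc show ?case
    by simp
qed simp

lemma geometric_iff_recurrence:
  "(\<forall>l. coeff_series (Suc l) = u * coeff_series l) \<longleftrightarrow> geometric \<and> u = coeff_series 1"
proof
  assume "\<forall>l. coeff_series (Suc l) = u * coeff_series l"
  then have "coeff_series l = u ^ l" for l
    by (induction l) auto
  then show "geometric \<and> u = coeff_series 1"
    by (simp add: geometric_def power_add)
next
  assume "geometric \<and> u = coeff_series 1"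
  then show "\<forall>l. coeff_series (Suc l) = u * coeff_series l"
    by (metis geometric_def plus_1_eq_Suc)
qed

lemma geometric_iff_prod_list:
  "geometric \<longleftrightarrow>
    (\<forall>ls. (\<forall>l\<in>set ls. l \<ge> 1) \<longrightarrow> coeff_series (sum_list ls) = prod_list (map coeff_series ls))"
proof
  assume "geometric"
  then have "coeff_series (sum_list ls) = prod_list (map coeff_series ls)" for ls
    by (induction ls) (auto simp: geometric_def)
  then show "\<forall>ls. (\<forall>l\<in>set ls. l \<ge> 1) \<longrightarrow> coeff_series (sum_list ls) = prod_list (map coeff_series ls)"
    by blast
next
  assume prod: "\<forall>ls. (\<forall>l\<in>set ls. l \<ge> 1) \<longrightarrow> coeff_series (sum_list ls) = prod_list (map coeff_series ls)"
  have "coeff_series (i + j) = coeff_series i * coeff_series j" for i j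
    using prod[rule_format, of "[i, j]"] by (cases "i = 0 \<or> j = 0") (auto simp: Suc_le_eq)
  then show geometric
    by (simp add: geometric_def)
qed

lemma Delta_P_iff_geometric:
  "(\<forall>n. Delta (P n) = (\<Sum>k\<le>n. embX (P k) * embY (P (n - k)))) \<longleftrightarrow> geometric"
proof -
  have "coeff (coeff (\<Sum>k\<le>n. embX (P k) * embY (P (n - k))) j) i = (coeff_series i * coeff_series j) $ n"
    for n i j
    by (simp add: embX_mult coeff_sum fps_mult_nth atMost_atLeast0 mult.commute)
  then show ?thesis
    by (auto simp: poly_eq_iff coeff_coeff_Delta geometric_def fps_eq_iff)
qed

lemma Delta_series_iff_geometric:
  "Abs_fps (\<lambda>n. Delta (P n)) = Abs_fps (\<lambda>n. embX (P n)) * Abs_fps (\<lambda>n. embY (P n)) \<longleftrightarrow> geometric"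
  by (simp add: fps_eq_iff fps_mult_nth atMost_atLeast0 flip: Delta_P_iff_geometric)

lemma Dop_series_iff:
  "Abs_fps (\<lambda>n. Dop (P n)) = Abs_fps (\<lambda>n. [:u $ n:]) * Abs_fps P \<longleftrightarrow> geometric \<and> u = coeff_series 1"
proof -
  have "coeff ((Abs_fps (\<lambda>n. [:u $ n:]) * Abs_fps P) $ n) l = (u * coeff_series l) $ n" for n l
    by (simp add: fps_mult_nth coeff_sum)
  then have "Abs_fps (\<lambda>n. Dop (P n)) = Abs_fps (\<lambda>n. [:u $ n:]) * Abs_fps P
      \<longleftrightarrow> (\<forall>l. coeff_series (Suc l) = u * coeff_series l)"
    by (auto simp: fps_eq_iff poly_eq_iff)
  then show ?thesis
    by (simp add: geometric_iff_recurrence)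
qed

text \<open>Comparing z^n-coefficients, H (1 - u x) = 1 says P_n = x sum_i u_i P_(n-i) for n \<ge> 1,
  and since P_n(0) = 0 this is D P_n = sum_i u_i P_(n-i).\<close>

lemma inverse_linear_iff:
  assumes u0: "u $ 0 = 0"
  shows "Abs_fps P * (1 - Abs_fps (\<lambda>n. [:0, u $ n:])) = 1 \<longleftrightarrow> geometric \<and> u = coeff_series 1"
proof -
  define S where "S n = (\<Sum>i\<le>n. [:u $ i:] * P (n - i))" for n
  have lhs: "(Abs_fps P * (1 - Abs_fps (\<lambda>n. [:0, u $ n:]))) $ n = P n - [:0, 1:] * S n" for n
  proof -
    have "(\<Sum>i=0..n. P i * [:0, u $ (n - i):]) = (\<Sum>i\<le>n. [:0, 1:] * ([:u $ (n - i):] * P i))"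
      by (rule sum.cong) (auto simp: atMost_atLeast0 algebra_simps)
    also have "\<dots> = [:0, 1:] * S n"
      unfolding S_def by (subst sum.atLeastAtMost_rev[of _ 0 n, simplified atMost_atLeast0[symmetric]])
        (simp add: sum_distrib_left)
    finally show ?thesis
      by (simp add: algebra_simps fps_mult_nth)
  qed
  have "P n - [:0, 1:] * S n = (if n = 0 then 1 else 0) \<longleftrightarrow> Dop (P n) = S n" for n
  proof (cases n)
    case 0
    then show ?thesis
      by (simp add: S_def u0 one_pCons)
  next
    case (Suc m)
    then have "P n = [:0, 1:] * Dop (P n)"
      using x_mult_Dop[of "P n"] P_at_0 by simp
    with Suc show ?thesis
      by (metis (no_types, lifting) eq_iff_diff_eq_0 mult_left_cancel nat.distinct(1) pCons_eq_0_iff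
          zero_neq_one)
  qed
  moreover have "(Abs_fps (\<lambda>n. [:u $ n:]) * Abs_fps P) $ n = S n" for n
    by (simp add: fps_mult_nth S_def atMost_atLeast0)
  ultimately have "Abs_fps P * (1 - Abs_fps (\<lambda>n. [:0, u $ n:])) = 1
      \<longleftrightarrow> Abs_fps (\<lambda>n. Dop (P n)) = Abs_fps (\<lambda>n. [:u $ n:]) * Abs_fps P"
    by (simp add: fps_eq_iff lhs)
  then show ?thesis
    by (simp add: Dop_series_iff)
qed

lemma inverse_linear_iff_geometric:
  "(\<exists>u::complex fps. u $ 0 = 0 \<and> u $ 1 = 1 \<and> Abs_fps P * (1 - Abs_fps (\<lambda>n. [:0, u $ n:])) = 1)
    \<longleftrightarrow> geometric"
  using inverse_linear_iff coeff_series_1_nth by blast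

lemma Dop_series_iff_geometric:
  "(\<exists>u::complex fps. u $ 0 = 0 \<and> u $ 1 = 1 \<and>
      Abs_fps (\<lambda>n. Dop (P n)) = Abs_fps (\<lambda>n. [:u $ n:]) * Abs_fps P) \<longleftrightarrow> geometric"
  using Dop_series_iff coeff_series_1_nth by blast

lemma sum_substitution_iff_geometric:
  "Abs_fps (\<lambda>n. eval_sum2 (P n)) *
      (Abs_fps (\<lambda>n. embX (P n)) + Abs_fps (\<lambda>n. embY (P n))
        - Abs_fps (\<lambda>n. embX (P n)) * Abs_fps (\<lambda>n. embY (P n)))
    = Abs_fps (\<lambda>n. embX (P n)) * Abs_fps (\<lambda>n. embY (P n)) \<longleftrightarrow> geometric"
proof -
  define H where "H = Abs_fps P"
  define L where "L = fps_right_inverse H 1"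
  have HL: "H * L = 1"
    unfolding L_def by (rule fps_right_inverse) (simp add: H_def)
  have inverse_unique: "H * M = 1 \<longleftrightarrow> L = M" for M
  proof
    assume HM: "H * M = 1"
    have "M = (H * L) * M"
      by (simp add: HL)
    also have "\<dots> = L * (H * M)"
      by (simp add: ac_simps)
    finally show "L = M"
      by (simp add: HM)
  qed (use HL in blast)
  have hom: "fps_map g H * fps_map g L = 1" if "is_ring_hom g" for g
    using that by (simp flip: fps_map_mult add: HL fps_map_1)
  have "Abs_fps (\<lambda>n. eval_sum2 (P n)) *
      (Abs_fps (\<lambda>n. embX (P n)) + Abs_fps (\<lambda>n. embY (P n))
        - Abs_fps (\<lambda>n. embX (P n)) * Abs_fps (\<lambda>n. embY (P n)))
    = Abs_fps (\<lambda>n. embX (P n)) * Abs_fps (\<lambda>n. embY (P n))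
    \<longleftrightarrow> fps_map eval_sum2 L = fps_map embX L + fps_map embY L - 1"
    unfolding fps_map_Abs_fps H_def[symmetric]
    by (rule reciprocal_identity_iff[OF hom hom hom])
      (simp_all add: is_ring_hom_embX is_ring_hom_embY is_ring_hom_eval_sum2)
  also have "\<dots> \<longleftrightarrow> (\<exists>u. u $ 0 = 0 \<and> L = 1 - Abs_fps (\<lambda>n. [:0, u $ n:]))"
    by (rule fps_map_eval_sum2_eq_iff) (simp add: L_def)
  also have "\<dots> \<longleftrightarrow> (\<exists>u. u $ 0 = 0 \<and> H * (1 - Abs_fps (\<lambda>n. [:0, u $ n:])) = 1)"
    by (simp only: inverse_unique)
  also have "\<dots> \<longleftrightarrow> (\<exists>u. u $ 0 = 0 \<and> geometric \<and> u = coeff_series 1)"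
    unfolding H_def using inverse_linear_iff by blast
  also have "\<dots> \<longleftrightarrow> geometric"
    using coeff_series_1_nth by auto
  finally show ?thesis .
qed

lemma prod_list_coeff_series_nth:
  assumes "\<forall>l\<in>set ls. l \<ge> 1"
  shows "prod_list (map coeff_series ls) $ n = (\<Sum>is\<in>compositions (length ls) n. coeff_prod P is ls)"
  using assms
proof (induction ls arbitrary: n)
  case Nil
  then show ?case
    by (simp add: compositions_0)
next
  case (Cons l ls)
  have IH: "prod_list (map coeff_series ls) $ m
      = (\<Sum>is\<in>compositions (length ls) m. coeff_prod P is ls)" for m
    using Cons by simp
  have "prod_list (map coeff_series (l # ls)) $ n
      = (\<Sum>i=0..n. coeff (P i) l * prod_list (map coeff_series ls) $ (n - i))"
    by (simp add: fps_mult_nth)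
  also have "\<dots> = (\<Sum>i\<in>{1..n}. coeff (P i) l * prod_list (map coeff_series ls) $ (n - i))"
    by (rule sum.mono_neutral_right) (use Cons.prems in \<open>auto simp: coeff_P_eq_0\<close>)
  also have "\<dots> = (\<Sum>i\<in>{1..n}. \<Sum>is\<in>compositions (length ls) (n - i). coeff_prod P (i # is) (l # ls))"
    by (simp add: IH sum_distrib_left)
  also have "\<dots> = (\<Sum>is\<in>compositions (length (l # ls)) n. coeff_prod P is (l # ls))"
    unfolding length_Cons by (rule sum_compositions_Suc[symmetric])
  finally show ?case .
qed

lemma alternating_expansion_runs_word:
  assumes "n \<ge> 1" and ls: "\<forall>l\<in>set ls. l \<ge> 1"
  shows "alternating_expansion P n (runs_word c ls) = prod_list (map coeff_series ls) $ n"
proof -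
  have "nc_add (alt_prod P False is) (alt_prod P True is) (runs_word c ls)
      = (if k = length ls then coeff_prod P is ls else 0)" if "is \<in> compositions k n" "k \<ge> 1" for k "is"
  proof -
    from that have "\<forall>i\<in>set is. coeff (P i) 0 = 0" "length is = k"
      by (auto simp: compositions_def coeff_P_0)
    with that(2) show ?thesis
      using alt_prod_runs_word[where Q = P and b = False and c = c, OF _ ls]
        alt_prod_runs_word[where Q = P and b = True and c = c, OF _ ls]
      by (cases c) (auto simp: nc_add_apply)
  qed
  then have "alternating_expansion P n (runs_word c ls)
      = (\<Sum>k\<in>{1..n}. if k = length ls then \<Sum>is\<in>compositions k n. coeff_prod P is ls else 0)"
    unfolding alternating_expansion_def nc_sum_apply by (intro sum.cong) auto
  also have "\<dots> = (\<Sum>is\<in>compositions (length ls) n. coeff_prod P is ls)"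
    using assms(1) by (auto simp: compositions_eq_empty compositions_0 not_less_eq_eq)
  finally show ?thesis
    by (simp add: prod_list_coeff_series_nth[OF ls])
qed

lemma Delta_ast_P_eq_alternating_expansion_iff:
  assumes n: "n \<ge> 1"
  shows "Delta_ast (P n) = alternating_expansion P n \<longleftrightarrow>
    (\<forall>ls. (\<forall>l\<in>set ls. l \<ge> 1) \<longrightarrow> coeff_series (sum_list ls) $ n = prod_list (map coeff_series ls) $ n)"
proof (intro iffI allI impI ext)
  fix ls :: "nat list"
  assume "Delta_ast (P n) = alternating_expansion P n" and ls: "\<forall>l\<in>set ls. l \<ge> 1"
  then have "Delta_ast (P n) (runs_word True ls) = alternating_expansion P n (runs_word True ls)"
    by simp
  then show "coeff_series (sum_list ls) $ n = prod_list (map coeff_series ls) $ n"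
    using alternating_expansion_runs_word[OF n ls] by (simp add: Delta_ast_apply)
next
  fix w :: "bool list"
  assume coeff_eq: "\<forall>ls. (\<forall>l\<in>set ls. l \<ge> 1) \<longrightarrow>
    coeff_series (sum_list ls) $ n = prod_list (map coeff_series ls) $ n"
  obtain ls where ls: "\<forall>l\<in>set ls. l \<ge> 1" "w = runs_word (hd w) ls"
    using runs_word_surj by blast
  have "Delta_ast (P n) (runs_word (hd w) ls) = alternating_expansion P n (runs_word (hd w) ls)"
    using coeff_eq n ls(1) by (simp add: Delta_ast_apply alternating_expansion_runs_word)
  then show "Delta_ast (P n) w = alternating_expansion P n w"
    by (simp only: ls(2)[symmetric])
qed

lemma Delta_ast_P_iff_geometric: "(\<forall>n\<ge>1. Delta_ast (P n) = alternating_expansion P n) \<longleftrightarrow> geometric"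
proof -
  have "(\<forall>n\<ge>1. Delta_ast (P n) = alternating_expansion P n)
      \<longleftrightarrow> (\<forall>n\<ge>1. \<forall>ls. (\<forall>l\<in>set ls. l \<ge> 1) \<longrightarrow>
        coeff_series (sum_list ls) $ n = prod_list (map coeff_series ls) $ n)"
    using Delta_ast_P_eq_alternating_expansion_iff by blast
  also have "\<dots> \<longleftrightarrow>
      (\<forall>ls. (\<forall>l\<in>set ls. l \<ge> 1) \<longrightarrow> coeff_series (sum_list ls) = prod_list (map coeff_series ls))"
  proof (intro iffI allI impI)
    fix ls :: "nat list"
    assume pos: "\<forall>l\<in>set ls. l \<ge> 1" and "\<forall>n\<ge>1. \<forall>ls. (\<forall>l\<in>set ls. l \<ge> 1) \<longrightarrow>
      coeff_series (sum_list ls) $ n = prod_list (map coeff_series ls) $ n"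
    then have nth: "coeff_series (sum_list ls) $ n = prod_list (map coeff_series ls) $ n"
      if "n \<noteq> 0" for n
      using that by simp
    have nth_0: "coeff_series (sum_list ls) $ 0 = prod_list (map coeff_series ls) $ 0"
      using pos by (induction ls) (auto simp: coeff_P_0)
    show "coeff_series (sum_list ls) = prod_list (map coeff_series ls)"
    proof (rule fps_ext)
      fix n
      show "coeff_series (sum_list ls) $ n = prod_list (map coeff_series ls) $ n"
        using nth nth_0 by (cases "n = 0") simp_all
    qed
  qed simp
  also have "\<dots> \<longleftrightarrow> geometric"
    by (rule geometric_iff_prod_list[symmetric])
  finally show ?thesis .
qed

end

section \<open>Operators lowering the family\<close>

lemma fps_compose_mult_nth:
  fixes u v g :: "'a::comm_ring_1 fps"
  assumes "u $ 0 = 0"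
  shows "(\<Sum>m\<le>n. v $ m * (u ^ m * g) $ n) = ((v oo u) * g) $ n"
proof -
  have "(\<Sum>m\<le>n. v $ m * (u ^ m * g) $ n) = (\<Sum>m\<le>n. \<Sum>k\<le>n. v $ m * (u ^ m) $ k * g $ (n - k))"
    by (simp add: fps_mult_nth atMost_atLeast0 sum_distrib_left mult.assoc)
  also have "\<dots> = (\<Sum>k\<le>n. \<Sum>m\<le>n. v $ m * (u ^ m) $ k * g $ (n - k))"
    by (rule sum.swap)
  also have "\<dots> = (\<Sum>k\<le>n. (\<Sum>m\<le>n. v $ m * (u ^ m) $ k) * g $ (n - k))"
    by (simp add: sum_distrib_right)
  also have "\<dots> = (\<Sum>k\<le>n. (v oo u) $ k * g $ (n - k))"
  proof (rule sum.cong[OF refl])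
    fix k
    assume "k \<in> {..n}"
    then have "(\<Sum>m\<le>n. v $ m * (u ^ m) $ k) = (\<Sum>m\<le>k. v $ m * (u ^ m) $ k)"
      by (intro sum.mono_neutral_right) (auto simp: startsby_zero_power_prefix[OF assms])
    then show "(\<Sum>m\<le>n. v $ m * (u ^ m) $ k) * g $ (n - k) = (v oo u) $ k * g $ (n - k)"
      by (simp add: fps_compose_nth atMost_atLeast0)
  qed
  finally show ?thesis
    by (simp add: fps_mult_nth atMost_atLeast0)
qed

context monic_family
begin

lemma P_spans: "degree f \<le> N \<Longrightarrow> \<exists>c. f = (\<Sum>k\<le>N. smult (c k) (P k))"
proof (induction N arbitrary: f)
  case 0
  then have "f = [:coeff f 0:]"
    by (metis degree_0_id le_zero_eq)
  then show ?case
    by (intro exI[of _ "\<lambda>_. coeff f 0"]) simp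
next
  case (Suc N)
  define g where "g = f - smult (coeff f (Suc N)) (P (Suc N))"
  have "coeff g i = 0" if "N < i" for i
  proof (cases "i = Suc N")
    case False
    with that Suc.prems show ?thesis
      by (simp add: g_def coeff_eq_0)
  qed (simp add: g_def)
  then have "degree g \<le> N"
    by (simp add: degree_le)
  then obtain c where "g = (\<Sum>k\<le>N. smult (c k) (P k))"
    using Suc.IH by blast
  then have "f = (\<Sum>k\<le>Suc N. smult ((c(Suc N := coeff f (Suc N))) k) (P k))"
    by (simp add: g_def diff_eq_eq)
  then show ?case
    by blast
qed

lemma lin_op_eq_on_P:
  assumes "lin_op S" "lin_op T" "\<And>n. S (P n) = T (P n)"
  shows "S = T"
proof
  fix f
  obtain c where c: "f = (\<Sum>k\<le>degree f. smult (c k) (P k))"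
    using P_spans by blast
  have "S f = (\<Sum>k\<le>degree f. smult (c k) (S (P k)))"
    by (subst c, rule lin_op_sum_smult[OF assms(1)])
  also have "\<dots> = T (\<Sum>k\<le>degree f. smult (c k) (P k))"
    by (simp add: lin_op_sum_smult[OF assms(2)] assms(3))
  finally show "S f = T f"
    using c by metis
qed

lemma coeff_fps_op_P:
  assumes "geometric"
  shows "coeff (fps_op v Dop (P n)) l = ((v oo coeff_series 1) * coeff_series 1 ^ l) $ n"
proof -
  define u where "u = coeff_series 1"
  have power: "coeff_series l = u ^ l" for l
    unfolding u_def by (rule geometric_imp_coeff_series_power[OF assms])
  have "coeff (fps_op v Dop (P n)) l = (\<Sum>m\<le>n. v $ m * coeff_series (m + l) $ n)"
    by (simp add: fps_op_def coeff_sum coeff_Dop_funpow add.commute)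
  also have "\<dots> = (\<Sum>m\<le>n. v $ m * (u ^ m * u ^ l) $ n)"
    by (simp add: power power_add)
  also have "\<dots> = ((v oo u) * u ^ l) $ n"
    by (rule fps_compose_mult_nth) (simp add: u_def coeff_series_1_nth)
  finally show ?thesis
    by (simp add: u_def)
qed

end

locale lowering_operator = monic_family +
  fixes A :: "complex poly \<Rightarrow> complex poly"
  assumes lin_op_A: "lin_op A"
    and A_P_0: "A (P 0) = 0"
    and A_P_Suc: "A (P (Suc n)) = P n"
begin

lemma A_1: "A 1 = 0"
  using A_P_0 by simp

lemma A_funpow_P: "(A ^^ k) (P n) = (if k \<le> n then P (n - k) else 0)"
proof (induction k)
  case (Suc k)
  show ?case
  proof (cases "Suc k \<le> n")
    case True
    then have "n - k = Suc (n - Suc k)"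
      by simp
    with Suc True show ?thesis
      by (simp add: A_P_Suc)
  next
    case False
    with Suc show ?thesis
      using A_P_0 A_P_Suc lin_op_0[OF lin_op_A] by (cases "k = n") auto
  qed
qed simp

lemma P_expansion: "degree f \<le> N \<Longrightarrow> f = (\<Sum>k\<le>N. smult (poly ((A ^^ k) f) 0) (P k))"
proof -
  assume "degree f \<le> N"
  then obtain c where c: "f = (\<Sum>j\<le>N. smult (c j) (P j))"
    using P_spans by blast
  have "poly ((A ^^ k) f) 0 = c k" if "k \<le> N" for k
  proof -
    have "poly ((A ^^ k) f) 0 = (\<Sum>j\<le>N. c j * poly ((A ^^ k) (P j)) 0)"
      by (subst c) (simp add: lin_op_sum_smult[OF lin_op_funpow[OF lin_op_A]] poly_sum)
    also have "\<dots> = (\<Sum>j\<le>N. if j = k then c j else 0)"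
      by (rule sum.cong) (auto simp: A_funpow_P poly_0_coeff_0 coeff_P_0)
    finally show ?thesis
      using that by simp
  qed
  then show ?thesis
    by (subst (1) c) (intro sum.cong; simp)
qed

lemma commute_Dop_imp_geometric:
  assumes "A \<circ> Dop = Dop \<circ> A"
  shows "geometric"
proof -
  have commute: "(A ^^ k) ((Dop ^^ j) f) = (Dop ^^ j) ((A ^^ k) f)" for k j f
    using assms by (intro funpow_commute) (metis comp_apply)
  have D_P: "(Dop ^^ j) (P n) = (\<Sum>k\<le>n. smult (coeff (P (n - k)) j) (P k))" for n j
  proof -
    have "degree ((Dop ^^ j) (P n)) \<le> n"
      using degree_Dop_funpow_le[of j "P n"] by simp
    then have "(Dop ^^ j) (P n) = (\<Sum>k\<le>n. smult (poly ((A ^^ k) ((Dop ^^ j) (P n))) 0) (P k))"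
      by (rule P_expansion)
    also have "\<dots> = (\<Sum>k\<le>n. smult (coeff (P (n - k)) j) (P k))"
      by (rule sum.cong) (auto simp: commute A_funpow_P poly_0_coeff_0 coeff_Dop_funpow)
    finally show ?thesis .
  qed
  have "coeff (P n) (i + j) = (coeff_series i * coeff_series j) $ n" for n i j
  proof -
    have "coeff (P n) (i + j) = coeff ((Dop ^^ j) (P n)) i"
      by (simp add: coeff_Dop_funpow)
    also have "\<dots> = (\<Sum>k\<le>n. coeff (P (n - k)) j * coeff (P k) i)"
      by (simp add: D_P coeff_sum)
    finally show ?thesis
      by (simp add: fps_mult_nth atMost_atLeast0 mult.commute)
  qed
  then show ?thesis
    by (simp add: geometric_def fps_eq_iff)
qed

lemma geometric_imp_A_eq_fps_op:
  assumes "geometric"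
  shows "A = fps_op (fps_inv (coeff_series 1)) Dop"
proof (rule lin_op_eq_on_P[OF lin_op_A lin_op_fps_op])
  fix n
  define u where "u = coeff_series 1"
  have "fps_inv u oo u = fps_X"
    by (rule fps_inv) (simp_all add: u_def coeff_series_1_nth)
  then have "coeff (fps_op (fps_inv u) Dop (P n)) l = (fps_X * u ^ l) $ n" for l
    using coeff_fps_op_P[OF assms] by (simp add: u_def)
  moreover have "u ^ l = coeff_series l" for l
    unfolding u_def by (rule geometric_imp_coeff_series_power[OF assms, symmetric])
  ultimately have "coeff (fps_op (fps_inv u) Dop (P n)) l = (fps_X * coeff_series l) $ n" for l
    by simp
  then show "A (P n) = fps_op (fps_inv (coeff_series 1)) Dop (P n)"
    by (cases n) (simp_all add: u_def poly_eq_iff A_1 A_P_Suc)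
qed

lemma A_commute_Dop_iff_geometric: "A \<circ> Dop = Dop \<circ> A \<longleftrightarrow> geometric"
proof
  assume "geometric"
  then have "A = fps_op (fps_inv (coeff_series 1)) Dop"
    by (rule geometric_imp_A_eq_fps_op)
  then show "A \<circ> Dop = Dop \<circ> A"
    by (simp add: fun_eq_iff fps_op_Dop_commute)
qed (rule commute_Dop_imp_geometric)

lemma A_eq_fps_op_iff_geometric:
  "(\<exists>u::complex fps. u $ 0 = 0 \<and> u $ 1 = 1 \<and> A = fps_op (fps_inv u) Dop) \<longleftrightarrow> geometric"
proof
  assume "\<exists>u::complex fps. u $ 0 = 0 \<and> u $ 1 = 1 \<and> A = fps_op (fps_inv u) Dop"
  then have "A \<circ> Dop = Dop \<circ> A"
    by (auto simp: fun_eq_iff fps_op_Dop_commute)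
  then show "geometric"
    by (rule commute_Dop_imp_geometric)
next
  assume "geometric"
  then show "\<exists>u::complex fps. u $ 0 = 0 \<and> u $ 1 = 1 \<and> A = fps_op (fps_inv u) Dop"
    using geometric_imp_A_eq_fps_op coeff_series_1_nth by blast
qed

end

section \<open>Maps sending x^n to the family\<close>

locale basis_map = monic_family +
  fixes W :: "complex poly \<Rightarrow> complex poly"
  assumes lin_op_W: "lin_op W"
    and W_monom: "W (monom 1 n) = P n"
begin

lemma W_eq_sum: "W f = (\<Sum>m\<le>degree f. smult (coeff f m) (P m))"
proof -
  have "f = (\<Sum>m\<le>degree f. smult (coeff f m) (monom 1 m))"
    using poly_as_sum_of_monoms[of f] by (simp add: smult_monom)
  then show ?thesis
    by (metis (no_types, lifting) W_monom lin_op_sum_smult[OF lin_op_W] sum.cong)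
qed

lemma tens_W_Delta_monom: "tens W W (Delta (monom 1 n)) = (\<Sum>k\<le>n. embX (P k) * embY (P (n - k)))"
proof -
  have "degree (Delta (monom 1 n)) \<le> n"
    using degree_Delta_le[of "monom 1 n"] by (simp add: degree_monom_eq)
  then have "tens W W (Delta (monom 1 n))
      = (\<Sum>j\<le>n. [:W (coeff (Delta (monom 1 n)) j):] * embY (W (monom 1 j)))"
    by (rule tens_eq_sum[OF lin_op_W])
  also have "\<dots> = (\<Sum>j\<le>n. embX (P (n - j)) * embY (P j))"
    by (rule sum.cong) (auto simp: coeff_Delta Dop_funpow_monom W_monom embX_def)
  also have "\<dots> = (\<Sum>k\<le>n. embX (P k) * embY (P (n - k)))"
    using sum.atLeastAtMost_rev[of "\<lambda>j. embX (P (n - j)) * embY (P j)" 0 n]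
    by (simp add: atMost_atLeast0)
  finally show ?thesis .
qed

lemma Delta_W_iff_geometric: "(\<forall>f. Delta (W f) = tens W W (Delta f)) \<longleftrightarrow> geometric"
proof -
  have "(\<forall>f. Delta (W f) = tens W W (Delta f))
      \<longleftrightarrow> (\<forall>n. Delta (P n) = (\<Sum>k\<le>n. embX (P k) * embY (P (n - k))))"
  proof
    assume a: "\<forall>f. Delta (W f) = tens W W (Delta f)"
    show "\<forall>n. Delta (P n) = (\<Sum>k\<le>n. embX (P k) * embY (P (n - k)))"
    proof
      fix n
      from a[rule_format, of "monom 1 n"]
      show "Delta (P n) = (\<Sum>k\<le>n. embX (P k) * embY (P (n - k)))"
        unfolding W_monom tens_W_Delta_monom .
    qed
  next
    assume b: "\<forall>n. Delta (P n) = (\<Sum>k\<le>n. embX (P k) * embY (P (n - k)))"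
    have "Delta (W f) = tens W W (Delta f)" for f
    proof (rule linear_eq_on_monomials[where F = "\<lambda>f. Delta (W f)" and G = "\<lambda>f. tens W W (Delta f)"])
      show "Delta (W (f + g)) = Delta (W f) + Delta (W g)" for f g
        by (simp add: lin_op_add[OF lin_op_W] Delta_add)
      show "Delta (W (smult c f)) = smult [:c:] (Delta (W f))" for c f
        by (simp add: lin_op_smult[OF lin_op_W] Delta_smult)
      show "tens W W (Delta (f + g)) = tens W W (Delta f) + tens W W (Delta g)" for f g
        by (simp add: Delta_add tens_add[OF lin_op_W])
      show "tens W W (Delta (smult c f)) = smult [:c:] (tens W W (Delta f))" for c f
        by (simp add: Delta_smult tens_smult[OF lin_op_W])
      show "Delta (W (monom 1 n)) = tens W W (Delta (monom 1 n))" for n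
        using b by (simp add: W_monom tens_W_Delta_monom)
    qed
    then show "\<forall>f. Delta (W f) = tens W W (Delta f)"
      by blast
  qed
  then show ?thesis
    by (simp add: Delta_P_iff_geometric)
qed

lemma Delta_ast_W_iff_geometric:
  "(\<forall>f. Delta_ast (W f) = free_op W W (Delta_ast f)) \<longleftrightarrow> geometric"
proof -
  have Delta_ast_W: "Delta_ast (W f) v = (\<Sum>m\<le>degree f. coeff f m * Delta_ast (P m) v)" for f v
    by (simp add: W_eq_sum Delta_ast_apply coeff_sum)
  have "(\<forall>f. Delta_ast (W f) = free_op W W (Delta_ast f))
      \<longleftrightarrow> (\<forall>m. Delta_ast (P m) = nc_sum {w. length w = m} (word_img W W))"
  proof
    assume j: "\<forall>f. Delta_ast (W f) = free_op W W (Delta_ast f)"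
    show "\<forall>m. Delta_ast (P m) = nc_sum {w. length w = m} (word_img W W)"
    proof (intro allI ext)
      fix m v
      have delta: "(\<Sum>i\<le>m. coeff (monom 1 m) i * g i) = g m" for g :: "nat \<Rightarrow> complex"
        by (subst sum.cong[where h = "\<lambda>i. if i = m then g i else 0"]) (auto simp: coeff_monom)
      have "Delta_ast (W (monom 1 m)) v = free_op W W (Delta_ast (monom 1 m)) v"
        using j by simp
      then show "Delta_ast (P m) v = nc_sum {w. length w = m} (word_img W W) v"
        by (simp only: Delta_ast_W free_op_Delta_ast degree_monom_eq[OF one_neq_zero] delta)
    qed
  qed (simp add: fun_eq_iff Delta_ast_W free_op_Delta_ast)
  also have "\<dots> \<longleftrightarrow> (\<forall>m\<ge>1. Delta_ast (P m) = alternating_expansion P m)"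
  proof -
    have "Delta_ast (P 0) = nc_sum {w. length w = 0} (word_img W W)"
      by (simp add: fun_eq_iff Delta_ast_apply nc_sum_apply nc_one_def coeff_P_0)
    moreover have "nc_sum {w. length w = m} (word_img W W) = alternating_expansion P m" if "m \<ge> 1" for m
      using sum_word_img[OF that, of W] by (simp add: W_monom)
    ultimately show ?thesis
      by (metis less_one not_less)
  qed
  also have "\<dots> \<longleftrightarrow> geometric"
    by (rule Delta_ast_P_iff_geometric)
  finally show ?thesis .
qed

end

theorem proposition5p4:
  fixes P :: "nat \<Rightarrow> complex poly"
    and A W :: "complex poly \<Rightarrow> complex poly"
  assumes monic: "\<forall>n. degree (P n) = n \<and> lead_coeff (P n) = 1"
    and zero_at_0: "\<forall>n\<ge>1. poly (P n) 0 = 0"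
    and A_lin: "lin_op A" and A_P0: "A (P 0) = 0" and A_P: "\<forall>n. A (P (Suc n)) = P n"
    and W_lin: "lin_op W" and W_mon: "\<forall>n. W (monom 1 n) = P n"
  defines "H \<equiv> Abs_fps P"
  shows
   "let
      ca = (\<forall>f. Delta (W f) = tens W W (Delta f));
      cb = (\<forall>n. Delta (P n) = (\<Sum>k\<le>n. embX (P k) * embY (P (n - k))));
      cc = (Abs_fps (\<lambda>n. Delta (P n)) = Abs_fps (\<lambda>n. embX (P n)) * Abs_fps (\<lambda>n. embY (P n)));
      cd = (\<exists>u::complex fps. u $ 0 = 0 \<and> u $ 1 = 1 \<and>
              H * (1 - Abs_fps (\<lambda>n. [:0, u $ n:])) = 1);
      ce = (\<exists>u::complex fps. u $ 0 = 0 \<and> u $ 1 = 1 \<and>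
              Abs_fps (\<lambda>n. Dop (P n)) = Abs_fps (\<lambda>n. [:u $ n:]) * H);
      cf = (\<exists>u::complex fps. u $ 0 = 0 \<and> u $ 1 = 1 \<and> A = fps_op (fps_inv u) Dop);
      cg = (A \<circ> Dop = Dop \<circ> A);
      ch = (\<forall>a::real. A \<circ> Eop a = Eop a \<circ> A);
      ci = (\<forall>f. tens A id (Delta f) = Delta (A f));
      cj = (\<forall>f. Delta_ast (W f) = free_op W W (Delta_ast f));
      ck = (\<forall>n\<ge>1. Delta_ast (P n) =
              nc_sum {1..n} (\<lambda>k. nc_sum {is. length is = k \<and> (\<forall>i\<in>set is. i \<ge> 1) \<and> sum_list is = n}
                 (\<lambda>is. nc_add (alt_prod P False is) (alt_prod P True is))));
      cl = (let Hx = Abs_fps (\<lambda>n. embX (P n)); Hy = Abs_fps (\<lambda>n. embY (P n));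
                Hxy = Abs_fps (\<lambda>n. eval_sum2 (P n))
            in Hxy * (Hx + Hy - Hx * Hy) = Hx * Hy)
    in (ca \<longleftrightarrow> cb) \<and> (ca \<longleftrightarrow> cc) \<and> (ca \<longleftrightarrow> cd) \<and> (ca \<longleftrightarrow> ce) \<and> (ca \<longleftrightarrow> cf)
       \<and> (ca \<longleftrightarrow> cg) \<and> (ca \<longleftrightarrow> ch) \<and> (ca \<longleftrightarrow> ci) \<and> (ca \<longleftrightarrow> cj) \<and> (ca \<longleftrightarrow> ck)
       \<and> (ca \<longleftrightarrow> cl)"
proof -
  interpret lowering_operator P A
  proof
    show "degree (P n) = n" "lead_coeff (P n) = 1" for n
      using monic by metis+
  qed (use zero_at_0 A_lin A_P0 A_P in auto)
  interpret basis_map P W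
    using W_lin W_mon by unfold_locales auto
  show ?thesis
    unfolding Let_def H_def
    by (simp only: Delta_W_iff_geometric Delta_P_iff_geometric Delta_series_iff_geometric
        inverse_linear_iff_geometric Dop_series_iff_geometric A_eq_fps_op_iff_geometric
        A_commute_Dop_iff_geometric commute_Eop_iff_commute_Dop[OF lin_op_A]
        tens_id_Delta_iff_commute_Dop[OF lin_op_A] Delta_ast_W_iff_geometric
        Delta_ast_P_iff_geometric[unfolded alternating_expansion_def compositions_def]
        sum_substitution_iff_geometric simp_thms)
qed

end
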